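(* If $f:S\to T$ is an injective nested tuple morphism, then $\mathrm{coal}(L_{f^c})=\mathrm{comp}(L_f,\mathrm{size}(T))$.
   Context: Nested tuples (of positive integers): a positive integer or a finite tuple of nested tuples; flattening $X^\flat$ = integer leaves left to right, $\mathrm{len}$, $\mathrm{entry}_i$, $\mathrm{size}$ = product of entries. $\langle n\rangle_*=\{*,1,\dots,n\}$. A layout $L=S:D$ has congruent nested tuples $S$ (positive) and $D$ (nonnegative), $L^\flat=S^\flat:D^\flat$. Flat layout operations on $L=(s_1,\dots,s_m):(d_1,\dots,d_m)$: $\mathrm{squeeze}(L)$ removes modes with $s_i=1$; $\mathrm{sort}(L)$ stably reorders modes so that they are nondecreasing for the order $s:d\preceq s':d'$ iff $d<d'$ or ($d=d'$ and $s\le s'$); $\mathrm{coal}^\flat(L)$ is obtained from $\mathrm{squeeze}(L)$ by repeatedly merging adjacent modes $s_i,s_{i+1}:d_i,d_{i+1}$ with $d_{i+1}=s_id_i$ into $s_is_{i+1}:d_i$. For a layout $L$ with $\mathrm{coal}^\flat(L^\flat)=(s_1,\dots,s_k):(d_1,\dots,d_k)$, $\mathrm{coal}(L)$ is this flat layout if $k>1$, $s_1:d_1$ (depth $0$) if $k=1$, and $1:0$ if $k=0$. For a positive integer $N$, a flat layout $A$ with $\mathrm{sort}(\mathrm{squeeze}(A))=(s_1,\dots,s_m):(d_1,\dots,d_m)$ is $N$-complementable if $s_id_i\mid d_{i+1}$ for $1\le i<m$ and $s_md_m\mid N$; then $\mathrm{comp}^\flat(A,N)=\mathrm{coal}^\flat(C)$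 where $C=\bigl(d_1,\tfrac{d_2}{s_1d_1},\dots,\tfrac{d_m}{s_{m-1}d_{m-1}},\tfrac{N}{s_md_m}\bigr):(1,s_1d_1,\dots,s_{m-1}d_{m-1},s_md_m)$. For a layout $A$ (with $A^\flat$ $N$-complementable), $\mathrm{comp}(A,N)=\mathrm{coal}(\mathrm{comp}^\flat(A^\flat,N))$. A nested tuple morphism $f:S\to T$ is given by a pointed map $\alpha:\langle\mathrm{len}(S)\rangle_*\to\langle\mathrm{len}(T)\rangle_*$ with each $j\ne*$ having at most one preimage and $\mathrm{entry}_i(S)=\mathrm{entry}_{\alpha(i)}(T)$ when $\alpha(i)\ne*$. It is injective if $\alpha$ is injective (so $\alpha(i)\ne*$ for all $i$). With $T^\flat=(t_1,\dots,t_n)$, $L_f$ has shape $S$ and stride congruent to $S$ with $i$-th flattened entry $0$ if $\alpha(i)=*$, else $\prod_{j<\alpha(i)}t_j$. For injective $f$, let $j_1<\dots<j_k$ be the elements of $\{1,\dots,n\}$ not in the image of $\alpha$; the complement $f^c:(t_{j_1},\dots,t_{j_k})\to T$ is the nested tuple morphism lying over $r\mapsto j_r$. *)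

theory Defs
  imports Main
begin

datatype 'a ntree = Leaf 'a | Tup "'a ntree list"

primrec nt_flat :: "'a ntree \<Rightarrow> 'a list" where
  "nt_flat (Leaf a) = [a]"
| "nt_flat (Tup xs) = concat (map nt_flat xs)"

definition is_ntuple :: "nat ntree \<Rightarrow> bool" where
  "is_ntuple S \<longleftrightarrow> (\<forall>x\<in>set_ntree S. 0 < x)"

definition nt_len :: "'a ntree \<Rightarrow> nat" where
  "nt_len S = length (nt_flat S)"

text \<open>1-based entries of the flattening.\<close>
definition nt_entry :: "'a ntree \<Rightarrow> nat \<Rightarrow> 'a" where
  "nt_entry S i = nt_flat S ! (i - 1)"

definition nt_size :: "nat ntree \<Rightarrow> nat" where
  "nt_size S = prod_list (nt_flat S)"

definition congruent :: "'a ntree \<Rightarrow> 'b ntree \<Rightarrow> bool" where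
  "congruent S D \<longleftrightarrow> map_ntree (\<lambda>_. ()) S = map_ntree (\<lambda>_. ()) D"

type_synonym layout = "nat ntree \<times> nat ntree"
type_synonym flat_layout = "(nat \<times> nat) list"  \<comment> \<open>list of modes s:d\<close>

definition is_layout :: "layout \<Rightarrow> bool" where
  "is_layout L \<longleftrightarrow> is_ntuple (fst L) \<and> congruent (fst L) (snd L)"

definition layout_flat :: "layout \<Rightarrow> flat_layout" where
  "layout_flat L = zip (nt_flat (fst L)) (nt_flat (snd L))"

definition flat_to_layout :: "flat_layout \<Rightarrow> layout" where
  "flat_to_layout A = (Tup (map (Leaf \<circ> fst) A), Tup (map (Leaf \<circ> snd) A))"

definition squeeze :: "flat_layout \<Rightarrow> flat_layout" where
  "squeeze A = filter (\<lambda>(s, d). s \<noteq> 1) A"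

text \<open>Stable sort w.r.t. s:d \<preceq> s':d' iff d < d' or (d = d' and s \<le> s'), implemented as a stable sort by s followed by a stable sort by d.\<close>
definition lsort :: "flat_layout \<Rightarrow> flat_layout" where
  "lsort A = sort_key snd (sort_key fst A)"

fun merge_modes :: "flat_layout \<Rightarrow> flat_layout" where
  "merge_modes [] = []"
| "merge_modes [x] = [x]"
| "merge_modes ((s1, d1) # (s2, d2) # rest) =
     (if d2 = s1 * d1 then merge_modes ((s1 * s2, d1) # rest)
      else (s1, d1) # merge_modes ((s2, d2) # rest))"

definition coal_flat :: "flat_layout \<Rightarrow> flat_layout" where
  "coal_flat A = merge_modes (squeeze A)"

definition coal :: "layout \<Rightarrow> layout" where
  "coal L = (let C = coal_flat (layout_flat L) in
     if length C > 1 then flat_to_layout C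
     else if length C = 1 then (Leaf (fst (hd C)), Leaf (snd (hd C)))
     else (Leaf 1, Leaf 0))"

definition complementable :: "flat_layout \<Rightarrow> nat \<Rightarrow> bool" where
  "complementable A N \<longleftrightarrow>
     (let B = lsort (squeeze A); m = length B in
       (\<forall>i. Suc i < m \<longrightarrow> fst (B ! i) * snd (B ! i) dvd snd (B ! Suc i)) \<and>
       (m > 0 \<longrightarrow> fst (B ! (m - 1)) * snd (B ! (m - 1)) dvd N))"

text \<open>C = (d_1, d_2/(s_1 d_1), ..., N/(s_m d_m)) : (1, s_1 d_1, ..., s_m d_m).\<close>
definition comp_C :: "flat_layout \<Rightarrow> nat \<Rightarrow> flat_layout" where
  "comp_C A N = (let B = lsort (squeeze A);
                     strides = 1 # map (\<lambda>(s, d). s * d) B;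
                     nums = map snd B @ [N] in
                  zip (map2 (div) nums strides) strides)"

definition comp_flat :: "flat_layout \<Rightarrow> nat \<Rightarrow> flat_layout" where
  "comp_flat A N = coal_flat (comp_C A N)"

definition layout_comp :: "layout \<Rightarrow> nat \<Rightarrow> layout" where
  "layout_comp A N = coal (flat_to_layout (comp_flat (layout_flat A) N))"

text \<open>A pointed map \<open>\<langle>len S\<rangle>\<^sub>* \<rightarrow> \<langle>len T\<rangle>\<^sub>*\<close> is represented by \<open>\<alpha> :: nat \<Rightarrow> nat option\<close>
  on the indices 1..len S, with None standing for the base point *.\<close>
definition is_morphism :: "nat ntree \<Rightarrow> nat ntree \<Rightarrow> (nat \<Rightarrow> nat option) \<Rightarrow> bool" where
  "is_morphism S T \<alpha> \<longleftrightarrow> is_ntuple S \<and> is_ntuple T \<and>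
     (\<forall>i\<in>{1..nt_len S}. \<forall>j. \<alpha> i = Some j \<longrightarrow> j \<in> {1..nt_len T} \<and> nt_entry S i = nt_entry T j) \<and>
     (\<forall>i\<in>{1..nt_len S}. \<forall>i'\<in>{1..nt_len S}. \<forall>j. \<alpha> i = Some j \<and> \<alpha> i' = Some j \<longrightarrow> i = i')"

definition injective_morphism :: "nat ntree \<Rightarrow> nat ntree \<Rightarrow> (nat \<Rightarrow> nat option) \<Rightarrow> bool" where
  "injective_morphism S T \<alpha> \<longleftrightarrow> is_morphism S T \<alpha> \<and> (\<forall>i\<in>{1..nt_len S}. \<alpha> i \<noteq> None) \<and>
     inj_on \<alpha> {1..nt_len S}"

definition L_mor :: "nat ntree \<Rightarrow> nat ntree \<Rightarrow> (nat \<Rightarrow> nat option) \<Rightarrow> layout" where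
  "L_mor S T \<alpha> = (S, THE D. congruent S D \<and>
      nt_flat D = map (\<lambda>i. case \<alpha> i of None \<Rightarrow> 0
                                  | Some j \<Rightarrow> prod_list (take (j - 1) (nt_flat T)))
                      [1..<nt_len S + 1])"

definition compl_idx :: "nat ntree \<Rightarrow> nat ntree \<Rightarrow> (nat \<Rightarrow> nat option) \<Rightarrow> nat list" where
  "compl_idx S T \<alpha> = filter (\<lambda>j. Some j \<notin> \<alpha> ` {1..nt_len S}) [1..<nt_len T + 1]"

definition compl_shape :: "nat ntree \<Rightarrow> nat ntree \<Rightarrow> (nat \<Rightarrow> nat option) \<Rightarrow> nat ntree" where
  "compl_shape S T \<alpha> = Tup (map (\<lambda>j. Leaf (nt_entry T j)) (compl_idx S T \<alpha>))"

definition compl_map :: "nat ntree \<Rightarrow> nat ntree \<Rightarrow> (nat \<Rightarrow> nat option) \<Rightarrow> (nat \<Rightarrow> nat option)" where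
  "compl_map S T \<alpha> = (\<lambda>r. Some (compl_idx S T \<alpha> ! (r - 1)))"

end

theory Submission
  imports Defs "HOL-Library.Multiset"
begin

text \<open>
  Call a position of the flattened shape \<open>t\<close> of \<open>T\<close> selected if it is hit by \<open>f\<close>
  and carries an entry different from 1. Up to the squeezed modes of size 1, \<open>L\<^sub>f\<close>
  consists of the modes \<open>t\<^sub>j : t\<^sub>1\<cdots>t\<^sub>j\<^sub>-\<^sub>1\<close> of \<open>T\<close> at the selected positions.
  Their strides strictly increase with \<open>j\<close>, so sorting lists them in positional order,
  and complementability reduces to divisibility of prefix products of \<open>t\<close>. The complement
  then has one mode per gap between consecutive selected positions: its size is the
  product of the entries in the gap and its stride the prefix product where the gap
  starts. On the other side, \<open>L\<^sub>f\<^sub>c\<close> consists of the unselected modes of \<open>T\<close>, and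
  coalescing merges precisely the runs of them that lie in a common gap.
\<close>

lemma set_nt_flat: "set (nt_flat X) = set_ntree X"
  by (induction X) auto

lemma nt_flat_map_ntree: "nt_flat (map_ntree f X) = map f (nt_flat X)"
  by (induction X) (simp_all add: map_concat cong: map_cong)

lemma congruent_nt_flat_unique:
  assumes "congruent S D1" "congruent S D2" "nt_flat D1 = nt_flat D2"
  shows "D1 = D2"
proof -
  have "map_ntree (\<lambda>_. ()) D1 = map_ntree (\<lambda>_. ()) D2"
    using assms(1,2) by (simp add: congruent_def)
  then have "rel_ntree (=) (map_ntree (\<lambda>_. ()) D1) (map_ntree (\<lambda>_. ()) D2)"
    by (simp add: ntree.rel_eq)
  then have "rel_ntree (\<lambda>_ _. True) D1 D2"
    by (simp add: ntree.rel_map)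
  then obtain Z where Z: "map_ntree fst Z = D1" "map_ntree snd Z = D2"
    by (auto simp: ntree.in_rel)
  have "map fst (nt_flat Z) = map snd (nt_flat Z)"
    using assms(3) unfolding Z[symmetric] nt_flat_map_ntree .
  then have "\<forall>z\<in>set_ntree Z. fst z = snd z"
    by (simp add: set_nt_flat[symmetric])
  then have "map_ntree fst Z = map_ntree snd Z"
    by (auto intro: ntree.map_cong0)
  with Z show ?thesis
    by simp
qed

lemma congruent_nt_flat_exists:
  fixes S :: "'a ntree" and F :: "'b list"
  shows "length F = length (nt_flat S) \<Longrightarrow> \<exists>D. congruent S D \<and> nt_flat D = F"
proof (induction S arbitrary: F)
  case (Leaf a)
  then obtain f where "F = [f]"
    by (auto simp: length_Suc_conv)
  then show ?case
    by (intro exI[of _ "Leaf f"]) (simp add: congruent_def)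
next
  case (Tup xs)
  have "\<exists>Ds. congruent (Tup ys) (Tup Ds) \<and> nt_flat (Tup Ds) = F"
    if "set ys \<subseteq> set xs" "length F = length (nt_flat (Tup ys))" for ys and F :: "'b list"
    using that
  proof (induction ys arbitrary: F)
    case (Cons y ys)
    obtain D where D: "congruent y D" "nt_flat D = take (length (nt_flat y)) F"
      using Tup.IH[of y "take (length (nt_flat y)) F"] Cons.prems by auto
    obtain Ds where Ds: "congruent (Tup ys) (Tup Ds)" "nt_flat (Tup Ds) = drop (length (nt_flat y)) F"
      using Cons.IH[of "drop (length (nt_flat y)) F"] Cons.prems by auto
    show ?case
      using D Ds by (intro exI[of _ "D # Ds"]) (simp add: congruent_def)
  qed (simp add: congruent_def)
  from this[of xs F] Tup.prems show ?case
    by auto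
qed

lemma nt_flat_THE_congruent:
  assumes "length F = length (nt_flat S)"
  shows "nt_flat (THE D. congruent S D \<and> nt_flat D = F) = F"
proof -
  have "\<exists>!D. congruent S D \<and> nt_flat D = F"
    using congruent_nt_flat_exists[OF assms] congruent_nt_flat_unique by blast
  then show ?thesis
    by (rule theI'[THEN conjunct2])
qed

section \<open>Coalescing\<close>

lemma merge_modes_Cons_hd:
  "\<exists>s' X'. merge_modes ((s, d) # X) = (s', d) # X'"
  by (induction "(s, d) # X" arbitrary: s X rule: merge_modes.induct) auto

lemma merge_modes_Cons_unmerged:
  "X = [] \<or> snd (hd X) \<noteq> s * d \<Longrightarrow> merge_modes ((s, d) # X) = (s, d) # merge_modes X"
  by (cases X) auto

lemma merge_modes_idem: "merge_modes (merge_modes X) = merge_modes X"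
proof (induction X rule: merge_modes.induct)
  case (3 s1 d1 s2 d2 rest)
  show ?case
  proof (cases "d2 = s1 * d1")
    case False
    obtain s' X' where "merge_modes ((s2, d2) # rest) = (s', d2) # X'"
      using merge_modes_Cons_hd by blast
    with False 3(2) show ?thesis
      by simp
  qed (use 3 in simp)
qed auto

lemma merge_modes_no_unit:
  "\<forall>(s, d)\<in>set X. s \<noteq> 1 \<Longrightarrow> \<forall>(s, d)\<in>set (merge_modes X). s \<noteq> 1"
  by (induction X rule: merge_modes.induct) auto

lemma coal_flat_idem: "coal_flat (coal_flat X) = coal_flat X"
proof -
  have "\<forall>(s, d)\<in>set (merge_modes (squeeze X)). s \<noteq> 1"
    by (rule merge_modes_no_unit) (auto simp: squeeze_def)
  then have "squeeze (merge_modes (squeeze X)) = merge_modes (squeeze X)"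
    by (auto simp: squeeze_def filter_id_conv)
  then show ?thesis
    by (simp add: coal_flat_def merge_modes_idem)
qed

lemma coal_flat_Cons_unit: "coal_flat ((1, d) # X) = coal_flat X"
  by (simp add: coal_flat_def squeeze_def)

lemma coal_flat_merge: "coal_flat ((a, d) # (b, a * d) # X) = coal_flat ((a * b, d) # X)"
  by (cases "a = 1"; cases "b = 1") (simp_all add: coal_flat_def squeeze_def)

lemma coal_flat_Cons_below:
  assumes "\<forall>(s, e)\<in>set X. a * d < e"
  shows "coal_flat ((a, d) # X) = squeeze [(a, d)] @ coal_flat X"
proof (cases "a = 1")
  case False
  have "\<forall>(s, e)\<in>set (squeeze X). a * d < e"
    using assms by (auto simp: squeeze_def)
  then have "squeeze X = [] \<or> snd (hd (squeeze X)) \<noteq> a * d"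
    by (cases "squeeze X") auto
  then show ?thesis
    using False by (simp add: coal_flat_def squeeze_def merge_modes_Cons_unmerged)
qed (simp add: coal_flat_def squeeze_def)

lemma coal_eqI:
  "coal_flat (layout_flat L) = coal_flat (layout_flat L') \<Longrightarrow> coal L = coal L'"
  by (simp add: coal_def)

lemma layout_flat_flat_to_layout: "layout_flat (flat_to_layout C) = C"
  by (induction C) (auto simp: layout_flat_def flat_to_layout_def)

section \<open>Modes of a column-major layout\<close>

definition modes :: "nat \<Rightarrow> (nat \<Rightarrow> bool) \<Rightarrow> nat list \<Rightarrow> flat_layout" where
  "modes q P t = map (\<lambda>j. (t ! j, q * prod_list (take j t))) (filter P [0..<length t])"

lemma lsort_eq_if_strides_strictly_sorted:
  assumes "mset A = mset B" "sorted_wrt (<) (map snd B)"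
  shows "lsort A = B"
  unfolding lsort_def
proof (rule sort_key_inj_key_eq)
  show "mset (sort_key fst A) = mset B"
    using assms(1) by simp
  then have "set (sort_key fst A) = set B"
    by (rule mset_eq_setD)
  then show "inj_on snd (set (sort_key fst A))"
    using assms(2) by (simp add: strict_sorted_iff distinct_map)
  show "sorted (map snd B)"
    using assms(2) by (rule strict_sorted_imp_sorted)
qed

lemma modes_Nil [simp]: "modes q P [] = []"
  by (simp add: modes_def)

lemma modes_Cons:
  "modes q P (x # t) = (if P 0 then [(x, q)] else []) @ modes (q * x) (\<lambda>j. P (Suc j)) t"
proof -
  have "[0..<length (x # t)] = 0 # map Suc [0..<length t]"
    by (simp add: map_Suc_upt upt_conv_Cons del: upt_Suc)
  then show ?thesis
    by (simp add: modes_def filter_map o_def mult.assoc)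
qed

lemma squeeze_modes: "squeeze (modes q P t) = modes q (\<lambda>j. P j \<and> t ! j \<noteq> 1) t"
  by (simp add: modes_def squeeze_def filter_map o_def filter_filter)

lemma prod_list_take_dvd:
  fixes t :: "'a :: comm_monoid_mult list"
  assumes "i \<le> j"
  shows "prod_list (take i t) dvd prod_list (take j t)"
proof -
  have "take j t = take i t @ take (j - i) (drop i t)"
    using assms by (metis le_add_diff_inverse take_add)
  then show ?thesis
    by simp
qed

lemma prod_list_take_Suc:
  "j < length t \<Longrightarrow> prod_list (take (Suc j) t) = prod_list (take j t) * t ! j"
  by (simp add: take_Suc_conv_app_nth)

lemma prod_list_take_pos: "\<forall>x\<in>set t. 0 < x \<Longrightarrow> 0 < prod_list (take i (t :: nat list))"
  by (induction t arbitrary: i) (auto simp: take_Cons')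

lemma prod_list_take_less:
  fixes t :: "nat list"
  assumes pos: "\<forall>x\<in>set t. 0 < x" and "i < j" "j \<le> length t" "t ! i \<noteq> 1"
  shows "prod_list (take i t) < prod_list (take j t)"
proof -
  have "0 < prod_list (take i t)"
    using pos by (rule prod_list_take_pos)
  moreover have "1 < t ! i"
  proof -
    have "0 < t ! i"
      using pos assms(2,3) by simp
    with assms(4) show ?thesis
      by linarith
  qed
  ultimately have "prod_list (take i t) < prod_list (take (Suc i) t)"
    using assms(2,3) by (simp add: prod_list_take_Suc)
  also have "\<dots> \<le> prod_list (take j t)"
    using assms(2) prod_list_take_pos[OF pos] by (intro dvd_imp_le[OF prod_list_take_dvd]) auto
  finally show ?thesis .
qed

lemma modes_stride_ge:
  "\<forall>x\<in>set t. 0 < x \<Longrightarrow> (s, d) \<in> set (modes q P t) \<Longrightarrow> q \<le> d"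
  using prod_list_take_pos[of t] by (auto simp: modes_def Suc_le_eq)

lemma sorted_modes_strides:
  assumes "\<forall>x\<in>set t. 0 < x" "\<forall>j. P j \<longrightarrow> t ! j \<noteq> 1" "0 < q"
  shows "sorted_wrt (<) (map snd (modes q P t))"
proof -
  have "sorted_wrt (<) (filter P [0..<length t])"
    by (rule sorted_wrt_filter) simp
  then have "sorted_wrt (\<lambda>i j. q * prod_list (take i t) < q * prod_list (take j t)) (filter P [0..<length t])"
    by (rule sorted_wrt_mono_rel[rotated]) (use assms in \<open>auto intro: prod_list_take_less\<close>)
  then show ?thesis
    by (simp add: modes_def sorted_wrt_map)
qed

lemma complementable_if_lsort_modes:
  fixes t :: "nat list"
  assumes "lsort (squeeze A) = modes 1 P t"
  shows "complementable A (prod_list t)"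
proof -
  define B where "B = modes 1 P t"
  define js where "js = filter P [0..<length t]"
  have len: "length B = length js"
    by (simp add: B_def modes_def js_def)
  have js_less: "js ! i < length t" if "i < length js" for i
    using that nth_mem[OF that] by (auto simp: js_def)
  have B_nth: "B ! i = (t ! (js ! i), prod_list (take (js ! i) t))" if "i < length js" for i
    using that by (simp add: B_def modes_def js_def)
  have size_stride: "fst (B ! i) * snd (B ! i) = prod_list (take (Suc (js ! i)) t)"
    if "i < length js" for i
    using B_nth[OF that] js_less[OF that] by (simp add: prod_list_take_Suc mult.commute)
  have chain: "fst (B ! i) * snd (B ! i) dvd snd (B ! Suc i)" if "Suc i < length B" for i
  proof -
    have "js ! i < js ! Suc i"
      using that len sorted_wrt_nth_less[of "(<)" js i "Suc i"] by (simp add: js_def sorted_wrt_filter)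
    then have "prod_list (take (Suc (js ! i)) t) dvd prod_list (take (js ! Suc i) t)"
      by (simp add: prod_list_take_dvd Suc_leI)
    moreover have "fst (B ! i) * snd (B ! i) = prod_list (take (Suc (js ! i)) t)"
      using that len by (intro size_stride) simp
    moreover have "snd (B ! Suc i) = prod_list (take (js ! Suc i) t)"
      using that len B_nth by simp
    ultimately show ?thesis
      by simp
  qed
  have last: "fst (B ! (length B - 1)) * snd (B ! (length B - 1)) dvd prod_list t"
    if "0 < length B"
  proof -
    have "Suc (js ! (length B - 1)) \<le> length t"
      using that len js_less[of "length B - 1"] by simp
    then have "prod_list (take (Suc (js ! (length B - 1))) t) dvd prod_list (take (length t) t)"
      by (rule prod_list_take_dvd)
    then show ?thesis
      using that len by (simp add: size_stride)
  qed
  show ?thesis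
    using assms chain last by (simp add: complementable_def Let_def B_def)
qed

section \<open>Complement modes\<close>

text \<open>The complement modes of the selected positions \<open>P\<close>, computed along \<open>t\<close>: \<open>d\<close> is the
  stride at which the current gap starts and \<open>g\<close> the product of its entries seen so far.\<close>

fun gap_modes :: "nat \<Rightarrow> nat \<Rightarrow> (nat \<Rightarrow> bool) \<Rightarrow> nat list \<Rightarrow> flat_layout" where
  "gap_modes d g P [] = [(g, d)]"
| "gap_modes d g P (x # t) =
     (if P 0 then (g, d) # gap_modes (d * g * x) 1 (\<lambda>j. P (Suc j)) t
      else gap_modes d (g * x) (\<lambda>j. P (Suc j)) t)"

lemma gap_modes_stride_ge:
  "\<forall>x\<in>set t. 0 < x \<Longrightarrow> 0 < g \<Longrightarrow> (s, e) \<in> set (gap_modes d g P t) \<Longrightarrow> d \<le> e"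
proof (induction t arbitrary: d g P)
  case (Cons x t)
  have x: "0 < x" and pos: "\<forall>x\<in>set t. 0 < x"
    using Cons.prems(1) by auto
  show ?case
  proof (cases "P 0")
    case True
    then consider "(s, e) = (g, d)" | "(s, e) \<in> set (gap_modes (d * g * x) 1 (\<lambda>j. P (Suc j)) t)"
      using Cons.prems(3) by auto
    then show ?thesis
    proof cases
      case 2
      then have "d * g * x \<le> e"
        by (rule Cons.IH[OF pos, where g = 1, rotated]) simp
      moreover have "d \<le> d * g * x"
        using x Cons.prems(2) by simp
      ultimately show ?thesis
        by linarith
    qed simp
  next
    case False
    then show ?thesis
      using Cons.IH[OF pos, of "g * x"] Cons.prems x by simp
  qed
qed simp

definition comp_modes :: "nat \<Rightarrow> flat_layout \<Rightarrow> nat \<Rightarrow> flat_layout" where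
  "comp_modes d B N = (let strides = d # map (\<lambda>(s, e). s * e) B;
                           nums = map snd B @ [N] in
                        zip (map2 (div) nums strides) strides)"

lemma comp_C_eq_comp_modes: "comp_C A N = comp_modes 1 (lsort (squeeze A)) N"
  by (simp add: comp_C_def comp_modes_def Let_def)

lemma comp_modes_Nil: "comp_modes d [] N = [(N div d, d)]"
  by (simp add: comp_modes_def)

lemma comp_modes_Cons:
  "0 < d \<Longrightarrow> comp_modes d ((s, d * g) # B) N = (g, d) # comp_modes (s * (d * g)) B N"
  by (simp add: comp_modes_def Let_def)

lemma gap_modes_eq_comp_modes:
  "\<forall>x\<in>set t. 0 < x \<Longrightarrow> 0 < d \<Longrightarrow> 0 < g \<Longrightarrow>
   gap_modes d g P t = comp_modes d (modes (d * g) P t) (d * g * prod_list t)"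
proof (induction t arbitrary: d g P)
  case Nil
  then show ?case
    by (simp add: comp_modes_Nil)
next
  case (Cons x t)
  have pos: "\<forall>x\<in>set t. 0 < x" "0 < x"
    using Cons.prems(1) by auto
  show ?case
  proof (cases "P 0")
    case True
    have "gap_modes d g P (x # t) = (g, d) # gap_modes (d * g * x) 1 (\<lambda>j. P (Suc j)) t"
      using True by simp
    also have "\<dots> = (g, d) # comp_modes (x * (d * g)) (modes (d * g * x) (\<lambda>j. P (Suc j)) t)
                                        (d * g * prod_list (x # t))"
      using Cons.IH[of "d * g * x" 1] pos Cons.prems by (simp add: mult_ac)
    also have "\<dots> = comp_modes d (modes (d * g) P (x # t)) (d * g * prod_list (x # t))"
      using True Cons.prems(2) by (simp add: modes_Cons comp_modes_Cons mult_ac)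
    finally show ?thesis .
  next
    case False
    then show ?thesis
      using Cons.IH[of d "g * x"] pos Cons.prems by (simp add: modes_Cons mult_ac)
  qed
qed

text \<open>An unselected mode extends the current gap (by \<open>coal_flat_merge\<close>), while a
  selected one closes it: every later stride exceeds \<open>g * d\<close>.\<close>

lemma coal_flat_gap_modes:
  assumes "\<forall>x\<in>set t. 0 < x" "\<forall>j. P j \<longrightarrow> t ! j \<noteq> 1" "0 < d" "0 < g"
  shows "coal_flat ((g, d) # modes (d * g) (\<lambda>j. \<not> P j) t) = coal_flat (gap_modes d g P t)"
  using assms
proof (induction t arbitrary: d g P)
  case (Cons x t)
  have pos: "\<forall>x\<in>set t. 0 < x" "0 < x"
    using Cons.prems(1) by auto
  have P_tl: "\<forall>j. P (Suc j) \<longrightarrow> t ! j \<noteq> 1"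
    using Cons.prems(2) by auto
  show ?case
  proof (cases "P 0")
    case True
    define d' where "d' = d * g * x"
    have "x \<noteq> 1"
      using True Cons.prems(2) by auto
    then have below: "g * d < d'"
      using pos(2) Cons.prems(3,4) by (simp add: d'_def)
    have IH: "coal_flat (modes d' (\<lambda>j. \<not> P (Suc j)) t) = coal_flat (gap_modes d' 1 (\<lambda>j. P (Suc j)) t)"
      using Cons.IH[OF pos(1) P_tl, of d' 1, unfolded coal_flat_Cons_unit mult_1_right]
        Cons.prems(3,4) pos(2)
      by (simp add: d'_def)
    have "coal_flat ((g, d) # modes d' (\<lambda>j. \<not> P (Suc j)) t)
          = squeeze [(g, d)] @ coal_flat (modes d' (\<lambda>j. \<not> P (Suc j)) t)"
      by (rule coal_flat_Cons_below) (use modes_stride_ge[OF pos(1)] below in fastforce)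
    also have "\<dots> = coal_flat ((g, d) # gap_modes d' 1 (\<lambda>j. P (Suc j)) t)"
      unfolding IH
      by (rule coal_flat_Cons_below[symmetric]) (use gap_modes_stride_ge[OF pos(1)] below in fastforce)
    finally show ?thesis
      using True by (simp add: modes_Cons d'_def)
  next
    case False
    have "coal_flat ((g, d) # modes (d * g) (\<lambda>j. \<not> P j) (x # t))
          = coal_flat ((g, d) # (x, g * d) # modes (d * g * x) (\<lambda>j. \<not> P (Suc j)) t)"
      using False by (simp add: modes_Cons mult.commute)
    also have "\<dots> = coal_flat ((g * x, d) # modes (d * (g * x)) (\<lambda>j. \<not> P (Suc j)) t)"
      by (simp add: coal_flat_merge mult.assoc)
    also have "\<dots> = coal_flat (gap_modes d (g * x) (\<lambda>j. P (Suc j)) t)"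
      using Cons.IH[OF pos(1) P_tl] Cons.prems(3,4) pos(2) by simp
    finally show ?thesis
      using False by simp
  qed
qed simp

section \<open>The layouts of a morphism and of its complement\<close>

definition mode_of :: "nat ntree \<Rightarrow> nat \<Rightarrow> nat \<times> nat" where
  "mode_of T j = (nt_entry T j, prod_list (take (j - 1) (nt_flat T)))"

lemma upt_1_conv_map_Suc: "[1..<n + 1] = map Suc [0..<n]"
  by (simp add: map_Suc_upt del: upt_Suc)

lemma map_upt_Suc_nth: "map (\<lambda>i. f (xs ! (i - 1))) [1..<length xs + 1] = map f xs"
  unfolding upt_1_conv_map_Suc by (rule nth_equalityI) simp_all

lemma layout_flat_L_mor:
  "layout_flat (L_mor S T \<alpha>) =
     map (\<lambda>i. (nt_entry S i, case \<alpha> i of None \<Rightarrow> 0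
                                     | Some j \<Rightarrow> prod_list (take (j - 1) (nt_flat T))))
         [1..<nt_len S + 1]"
proof -
  define U where "U = [1..<nt_len S + 1]"
  define stride where
    "stride i = (case \<alpha> i of None \<Rightarrow> 0 | Some j \<Rightarrow> prod_list (take (j - 1) (nt_flat T)))" for i
  have "nt_flat (snd (L_mor S T \<alpha>)) = map stride U"
    unfolding L_mor_def snd_conv U_def stride_def
    by (rule nt_flat_THE_congruent) (simp add: nt_len_def del: upt_Suc)
  moreover have "nt_flat S = map (nt_entry S) U"
    using map_upt_Suc_nth[of "\<lambda>x. x" "nt_flat S"]
    by (simp add: U_def nt_entry_def[abs_def] nt_len_def del: upt_Suc)
  ultimately have "layout_flat (L_mor S T \<alpha>) = zip (map (nt_entry S) U) (map stride U)"
    by (simp add: layout_flat_def L_mor_def)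
  then show ?thesis
    unfolding U_def stride_def by (simp add: zip_map_map zip_same_conv_map del: upt_Suc)
qed

lemma layout_flat_L_mor_injective:
  assumes "injective_morphism S T \<alpha>"
  shows "layout_flat (L_mor S T \<alpha>) = map (mode_of T \<circ> the \<circ> \<alpha>) [1..<nt_len S + 1]"
  unfolding layout_flat_L_mor
proof (rule map_cong[OF refl])
  fix i assume "i \<in> set [1..<nt_len S + 1]"
  then have i: "i \<in> {1..nt_len S}"
    by (simp del: upt_Suc)
  then have "\<alpha> i \<noteq> None"
    using assms unfolding injective_morphism_def by blast
  then obtain j where j: "\<alpha> i = Some j"
    by blast
  then have "nt_entry S i = nt_entry T j"
    using assms i unfolding injective_morphism_def is_morphism_def by blast
  with j show "(nt_entry S i, case \<alpha> i of None \<Rightarrow> 0 | Some j \<Rightarrow> prod_list (take (j - 1) (nt_flat T)))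
               = (mode_of T \<circ> the \<circ> \<alpha>) i"
    by (simp add: mode_of_def)
qed

lemma nt_flat_Tup_Leaf: "nt_flat (Tup (map (\<lambda>x. Leaf (f x)) xs)) = map f xs"
  by (induction xs) simp_all

lemma layout_flat_L_mor_compl:
  "layout_flat (L_mor (compl_shape S T \<alpha>) T (compl_map S T \<alpha>)) = map (mode_of T) (compl_idx S T \<alpha>)"
proof -
  define js where "js = compl_idx S T \<alpha>"
  have flat: "nt_flat (compl_shape S T \<alpha>) = map (nt_entry T) js"
    unfolding compl_shape_def js_def by (rule nt_flat_Tup_Leaf)
  have "layout_flat (L_mor (compl_shape S T \<alpha>) T (compl_map S T \<alpha>))
        = map (\<lambda>i. mode_of T (js ! (i - 1))) [1..<length js + 1]"
    unfolding layout_flat_L_mor nt_len_def flat length_map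
  proof (rule map_cong[OF refl])
    fix i assume "i \<in> set [1..<length js + 1]"
    then have "1 \<le> i \<and> i < length js + 1"
      by (simp del: upt_Suc)
    then have "i - 1 < length js"
      by linarith
    then show "(nt_entry (compl_shape S T \<alpha>) i,
                case compl_map S T \<alpha> i of None \<Rightarrow> 0 | Some j \<Rightarrow> prod_list (take (j - 1) (nt_flat T)))
               = mode_of T (js ! (i - 1))"
      by (simp add: nt_entry_def[of "compl_shape S T \<alpha>"] flat compl_map_def js_def mode_of_def)
  qed
  also have "\<dots> = map (mode_of T) js"
    by (rule map_upt_Suc_nth)
  finally show ?thesis
    by (simp add: js_def)
qed

lemma map_mode_of_filter:
  "map (mode_of T) (filter Q [1..<nt_len T + 1]) = modes 1 (\<lambda>j. Q (Suc j)) (nt_flat T)"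
proof -
  have "[1..<nt_len T + 1] = map Suc [0..<length (nt_flat T)]"
    by (simp add: map_Suc_upt nt_len_def)
  then show ?thesis
    by (simp add: modes_def filter_map mode_of_def nt_entry_def o_def)
qed

lemma mset_map_the_injective_morphism:
  assumes f: "injective_morphism S T \<alpha>"
  shows "mset (map (the \<circ> \<alpha>) [1..<nt_len S + 1]) =
           mset (filter (\<lambda>j. Some j \<in> \<alpha> ` {1..nt_len S}) [1..<nt_len T + 1])"
proof -
  define js where "js = map (the \<circ> \<alpha>) [1..<nt_len S + 1]"
  define hits where "hits = filter (\<lambda>j. Some j \<in> \<alpha> ` {1..nt_len S}) [1..<nt_len T + 1]"
  have some: "\<forall>i\<in>{1..nt_len S}. \<alpha> i \<noteq> None" and inj: "inj_on \<alpha> {1..nt_len S}"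
    and range: "\<forall>i\<in>{1..nt_len S}. \<forall>j. \<alpha> i = Some j \<longrightarrow> j \<in> {1..nt_len T}"
    using f unfolding injective_morphism_def is_morphism_def by blast+
  have "inj_on the (\<alpha> ` {1..nt_len S})"
  proof (rule inj_onI)
    fix x y assume "x \<in> \<alpha> ` {1..nt_len S}" "y \<in> \<alpha> ` {1..nt_len S}" "the x = the y"
    with some show "x = y"
      by (metis imageE option.expand)
  qed
  with inj have "inj_on (the \<circ> \<alpha>) {1..nt_len S}"
    by (rule comp_inj_on)
  then have "distinct js"
    by (simp add: js_def distinct_map atLeastLessThanSuc_atLeastAtMost del: upt_Suc)
  moreover have "set js = set hits"
  proof (intro set_eqI iffI)
    fix j assume "j \<in> set js"
    then obtain i where i: "i \<in> {1..nt_len S}" "j = the (\<alpha> i)"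
      by (auto simp: js_def less_Suc_eq_le simp del: upt_Suc)
    then have "\<alpha> i = Some j"
      using some by auto
    then have "Some j \<in> \<alpha> ` {1..nt_len S}" and "j \<in> {1..nt_len T}"
      using i(1) range by (metis image_eqI, blast)
    then show "j \<in> set hits"
      by (simp add: hits_def del: upt_Suc)
  next
    fix j assume "j \<in> set hits"
    then obtain i where "i \<in> {1..nt_len S}" "\<alpha> i = Some j"
      by (auto simp: hits_def simp del: upt_Suc)
    then have "j = (the \<circ> \<alpha>) i" "i \<in> set [1..<nt_len S + 1]"
      by (simp_all del: upt_Suc)
    then show "j \<in> set js"
      unfolding js_def set_map by (rule image_eqI)
  qed
  moreover have "distinct hits"
    by (simp add: hits_def del: upt_Suc)
  ultimately show ?thesis
    unfolding js_def[symmetric] hits_def[symmetric] by (simp add: set_eq_iff_mset_eq_distinct)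
qed

lemma mset_layout_flat_L_mor:
  assumes "injective_morphism S T \<alpha>"
  shows "mset (layout_flat (L_mor S T \<alpha>)) =
           mset (map (mode_of T) (filter (\<lambda>j. Some j \<in> \<alpha> ` {1..nt_len S}) [1..<nt_len T + 1]))"
proof -
  have "mset (layout_flat (L_mor S T \<alpha>))
        = image_mset (mode_of T) (mset (map (the \<circ> \<alpha>) [1..<nt_len S + 1]))"
    by (simp add: layout_flat_L_mor_injective[OF assms] multiset.map_comp comp_assoc del: upt_Suc)
  also have "\<dots> = image_mset (mode_of T) (mset (filter (\<lambda>j. Some j \<in> \<alpha> ` {1..nt_len S}) [1..<nt_len T + 1]))"
    unfolding mset_map_the_injective_morphism[OF assms] ..
  finally show ?thesis
    by (simp del: upt_Suc)
qed

text \<open>Positions of \<^term>\<open>nt_flat T\<close> are 0-based here, while \<open>\<alpha>\<close> acts on 1-based indices.\<close>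

definition selected :: "nat ntree \<Rightarrow> nat ntree \<Rightarrow> (nat \<Rightarrow> nat option) \<Rightarrow> nat \<Rightarrow> bool" where
  "selected S T \<alpha> = (\<lambda>j. Some (Suc j) \<in> \<alpha> ` {1..nt_len S} \<and> nt_flat T ! j \<noteq> 1)"

lemma is_ntuple_nt_flat_pos: "is_ntuple T \<Longrightarrow> \<forall>x\<in>set (nt_flat T). 0 < x"
  by (simp add: is_ntuple_def set_nt_flat)

lemma lsort_squeeze_layout_flat_L_mor:
  assumes f: "injective_morphism S T \<alpha>"
  shows "lsort (squeeze (layout_flat (L_mor S T \<alpha>))) = modes 1 (selected S T \<alpha>) (nt_flat T)"
proof (rule lsort_eq_if_strides_strictly_sorted)
  define I where "I = (\<lambda>j. Some (Suc j) \<in> \<alpha> ` {1..nt_len S})"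
  have "mset (layout_flat (L_mor S T \<alpha>)) = mset (modes 1 I (nt_flat T))"
    using mset_layout_flat_L_mor[OF f] unfolding map_mode_of_filter I_def .
  then have "mset (squeeze (layout_flat (L_mor S T \<alpha>))) = mset (squeeze (modes 1 I (nt_flat T)))"
    by (simp add: squeeze_def)
  then show "mset (squeeze (layout_flat (L_mor S T \<alpha>))) = mset (modes 1 (selected S T \<alpha>) (nt_flat T))"
    by (simp add: squeeze_modes selected_def I_def)
  have "\<forall>x\<in>set (nt_flat T). 0 < x"
    using f by (intro is_ntuple_nt_flat_pos) (simp add: injective_morphism_def is_morphism_def)
  then show "sorted_wrt (<) (map snd (modes 1 (selected S T \<alpha>) (nt_flat T)))"
    by (rule sorted_modes_strides) (simp_all add: selected_def)
qed

lemma coal_flat_layout_flat_L_mor_compl: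
  assumes "is_ntuple T"
  shows "coal_flat (layout_flat (L_mor (compl_shape S T \<alpha>) T (compl_map S T \<alpha>)))
           = coal_flat (gap_modes 1 1 (selected S T \<alpha>) (nt_flat T))"
proof -
  define I where "I = (\<lambda>j. Some (Suc j) \<in> \<alpha> ` {1..nt_len S})"
  let ?P = "selected S T \<alpha>"
  have "coal_flat (layout_flat (L_mor (compl_shape S T \<alpha>) T (compl_map S T \<alpha>)))
        = coal_flat (modes 1 (\<lambda>j. \<not> I j) (nt_flat T))"
    unfolding layout_flat_L_mor_compl compl_idx_def map_mode_of_filter I_def ..
  also have "\<dots> = coal_flat (modes 1 (\<lambda>j. \<not> ?P j) (nt_flat T))"
  proof -
    have "(\<lambda>j. \<not> I j \<and> nt_flat T ! j \<noteq> 1) = (\<lambda>j. \<not> ?P j \<and> nt_flat T ! j \<noteq> 1)"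
      by (auto simp: selected_def I_def)
    then show ?thesis
      by (simp add: coal_flat_def squeeze_modes)
  qed
  also have "\<dots> = coal_flat ((1, 1) # modes (1 * 1) (\<lambda>j. \<not> ?P j) (nt_flat T))"
    unfolding coal_flat_Cons_unit mult_1 ..
  also have "\<dots> = coal_flat (gap_modes 1 1 ?P (nt_flat T))"
    using assms by (intro coal_flat_gap_modes is_ntuple_nt_flat_pos) (simp_all add: selected_def)
  finally show ?thesis .
qed

theorem mainTheorem4:
  fixes S T :: "nat ntree" and \<alpha> :: "nat \<Rightarrow> nat option"
  assumes "injective_morphism S T \<alpha>"
  shows "complementable (layout_flat (L_mor S T \<alpha>)) (nt_size T) \<and>
         coal (L_mor (compl_shape S T \<alpha>) T (compl_map S T \<alpha>))
           = layout_comp (L_mor S T \<alpha>) (nt_size T)"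
proof -
  let ?A = "layout_flat (L_mor S T \<alpha>)" and ?P = "selected S T \<alpha>" and ?t = "nt_flat T"
  have T: "is_ntuple T"
    using assms by (simp add: injective_morphism_def is_morphism_def)
  have size: "nt_size T = prod_list ?t"
    by (simp add: nt_size_def)
  have sorted: "lsort (squeeze ?A) = modes 1 ?P ?t"
    using assms by (rule lsort_squeeze_layout_flat_L_mor)
  have "complementable ?A (nt_size T)"
    using complementable_if_lsort_modes[OF sorted] size by simp
  moreover have "comp_flat ?A (nt_size T) = coal_flat (gap_modes 1 1 ?P ?t)"
    using gap_modes_eq_comp_modes[OF is_ntuple_nt_flat_pos[OF T], of 1 1 ?P]
    by (simp add: comp_flat_def comp_C_eq_comp_modes sorted size)
  moreover note coal_flat_layout_flat_L_mor_compl[OF T, of S \<alpha>]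
  ultimately show ?thesis
    unfolding layout_comp_def
    by (auto intro: coal_eqI simp: layout_flat_flat_to_layout coal_flat_idem)
qed

end
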